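(* Let $H$ be a tree of order at least two. Then $S_2(H)$ (for any function $\alpha$) is a DPDP-tree. Moreover, $S_2(H)$ is not a minimal DPDP-tree if and only if there is a tree $Q$ in $H-(L_H\cup S_H)$ such that $Q\circ K_1$ is a subtree of $H-L_H$ and $d_H(x)=d_Q(x)+1$ for each vertex $x$ of $Q$.
   Context: Graphs are finite. A leaf is a vertex of degree one; a support vertex is a vertex adjacent to a leaf; $L_H$ and $S_H$ denote the sets of leaves and of support vertices of $H$. The corona $Q\circ K_1$ is obtained from $Q$ by attaching one pendant edge to each vertex of $Q$; "$Q\circ K_1$ is a subtree of $H-L_H$" means that $H-L_H$ contains $Q$ together with, for each vertex of $Q$, a distinct additional neighbor outside $Q$, forming a copy of $Q\circ K_1$. A set $D\subseteq V(G)$ is dominating if every vertex outside $D$ has a neighbor in $D$; $P$ is paired-dominating if it is dominating and the subgraph induced by $P$ has a perfect matching. A DPDP-graph (DPDP-tree if a tree) is a graph $G$ admitting disjoint sets $D,P$ with $V(G)=D\cup P$, $D$ dominating and $P$ paired-dominating; a minimal DPDP-graph is a DPDP-graph no proper spanning subgraph of which is a DPDP-graph. 2-subdivision graph: for a graph $H$ with no isolated vertex and $\alpha:L_H\to\mathbb{N}=\{1,2,\dots\}$, $S_2(H)$ has vertex set $(V_H\setminus L_H)\cup\{(v,i): v\in L_H, 1\le i\le \alpha(v)\}$ together with two new vertices $u_e,v_e$ for each edge $e=uv$ of $H$. Its edges are: $u_ev_e$ for each edge $e=uv$; for $v\in V_H\setminus L_H$, $vv_e$ for each edge $e$ at $v$;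 for $v\in L_H$ with incident edge $e$, the edges $v_e(v,i)$, $1\le i\le\alpha(v)$. *)

theory Defs
  imports Main
begin

definition graph :: "'a set \<Rightarrow> 'a set set \<Rightarrow> bool" where
  "graph V E \<longleftrightarrow> finite V \<and> (\<forall>e\<in>E. \<exists>u v. e = {u, v} \<and> u \<in> V \<and> v \<in> V \<and> u \<noteq> v)"

definition degree :: "'a set set \<Rightarrow> 'a \<Rightarrow> nat" where
  "degree E v = card {e \<in> E. v \<in> e}"

definition leaves :: "'a set \<Rightarrow> 'a set set \<Rightarrow> 'a set" where
  "leaves V E = {v \<in> V. degree E v = 1}"

definition supports :: "'a set \<Rightarrow> 'a set set \<Rightarrow> 'a set" where
  "supports V E = {v \<in> V. \<exists>u \<in> leaves V E. {u, v} \<in> E}"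

definition connected_graph :: "'a set \<Rightarrow> 'a set set \<Rightarrow> bool" where
  "connected_graph V E \<longleftrightarrow> (\<forall>u\<in>V. \<forall>v\<in>V. (\<lambda>x y. {x, y} \<in> E)\<^sup>*\<^sup>* u v)"

definition has_cycle :: "'a set \<Rightarrow> 'a set set \<Rightarrow> bool" where
  "has_cycle V E \<longleftrightarrow> (\<exists>xs. length xs \<ge> 3 \<and> distinct xs \<and> set xs \<subseteq> V \<and>
     (\<forall>i < length xs. {xs ! i, xs ! ((i + 1) mod length xs)} \<in> E))"

definition is_tree :: "'a set \<Rightarrow> 'a set set \<Rightarrow> bool" where
  "is_tree V E \<longleftrightarrow> graph V E \<and> V \<noteq> {} \<and> connected_graph V E \<and> \<not> has_cycle V E"

definition dominating :: "'a set \<Rightarrow> 'a set set \<Rightarrow> 'a set \<Rightarrow> bool" where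
  "dominating V E D \<longleftrightarrow> D \<subseteq> V \<and> (\<forall>v \<in> V - D. \<exists>u \<in> D. {u, v} \<in> E)"

definition induced_perfect_matching :: "'a set set \<Rightarrow> 'a set \<Rightarrow> bool" where
  "induced_perfect_matching E P \<longleftrightarrow>
     (\<exists>M \<subseteq> E. (\<forall>e \<in> M. e \<subseteq> P) \<and> (\<forall>v \<in> P. \<exists>!e. e \<in> M \<and> v \<in> e))"

definition paired_dominating :: "'a set \<Rightarrow> 'a set set \<Rightarrow> 'a set \<Rightarrow> bool" where
  "paired_dominating V E P \<longleftrightarrow> dominating V E P \<and> induced_perfect_matching E P"

definition dpdp :: "'a set \<Rightarrow> 'a set set \<Rightarrow> bool" where
  "dpdp V E \<longleftrightarrow> (\<exists>D P. D \<inter> P = {} \<and> D \<union> P = V \<and> dominating V E D \<and> paired_dominating V E P)"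

definition minimal_dpdp :: "'a set \<Rightarrow> 'a set set \<Rightarrow> bool" where
  "minimal_dpdp V E \<longleftrightarrow> dpdp V E \<and> (\<forall>E'. E' \<subset> E \<longrightarrow> \<not> dpdp V E')"

definition dpdp_tree :: "'a set \<Rightarrow> 'a set set \<Rightarrow> bool" where
  "dpdp_tree V E \<longleftrightarrow> is_tree V E \<and> dpdp V E"

definition minimal_dpdp_tree :: "'a set \<Rightarrow> 'a set set \<Rightarrow> bool" where
  "minimal_dpdp_tree V E \<longleftrightarrow> is_tree V E \<and> minimal_dpdp V E"

text \<open>Vertices of the 2-subdivision graph: Orig v (v a non-leaf of H),
  LCopy v i = (v,i) for leaves v, and Sub v e = v_e for an edge e at v.\<close>
datatype 'a s2v = Orig 'a | LCopy 'a nat | Sub 'a "'a set"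

definition S2V :: "'a set \<Rightarrow> 'a set set \<Rightarrow> ('a \<Rightarrow> nat) \<Rightarrow> 'a s2v set" where
  "S2V V E \<alpha> =
     Orig ` (V - leaves V E)
     \<union> {LCopy v i | v i. v \<in> leaves V E \<and> 1 \<le> i \<and> i \<le> \<alpha> v}
     \<union> {Sub v e | v e. e \<in> E \<and> v \<in> e}"

definition S2E :: "'a set \<Rightarrow> 'a set set \<Rightarrow> ('a \<Rightarrow> nat) \<Rightarrow> 'a s2v set set" where
  "S2E V E \<alpha> =
     {{Sub u e, Sub v e} | u v e. e \<in> E \<and> e = {u, v} \<and> u \<noteq> v}
     \<union> {{Orig v, Sub v e} | v e. v \<in> V - leaves V E \<and> e \<in> E \<and> v \<in> e}
     \<union> {{Sub v e, LCopy v i} | v e i. v \<in> leaves V E \<and> e \<in> E \<and> v \<in> e \<and> 1 \<le> i \<and> i \<le> \<alpha> v}"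

end

theory Submission
  imports Defs
begin

text \<open>
  Every edge of S2(H) is a bridge. For a middle edge u_e v_e this holds because walks avoiding it
  project, via the base vertex, to walks in H - e; without the edge joining u_e to u (or to a leaf
  copy of u), the vertex u_e is attached only to v_e, on the v-side of H - e. Taking P to be the
  subdivision vertices, matched along the middle edges, and D the remaining vertices shows that
  S2(H) is a DPDP-tree.

  Let a proper spanning subgraph have a DPDP partition (D, P) with matching M. If no original
  vertex lies in P, then every subdivision vertex does and every edge of S2(H) is forced into the
  subgraph. So some original vertex u lies in P; it is matched with some u_e, e = uw, where w is
  not a leaf, and every other neighbour z of u again lies in P. Hence R = {u. u in P} is closed
  under the edges uz with z distinct from f(u) = w, and a terminal strongly connected class Q of
  this relation is the required subtree: f(u) is the unique neighbour of u outside Q.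

  Conversely, given such Q, delete the middle edges inside Q. Then P, consisting of Q and of the
  subdivision vertices u_e whose other end lies outside Q, matched u with u_e for e = u f(u) and
  otherwise along middle edges, and D, the remaining vertices, form a DPDP partition.
\<close>

abbreviation reachable :: "'a set set \<Rightarrow> 'a \<Rightarrow> 'a \<Rightarrow> bool" where
  "reachable E \<equiv> (\<lambda>x y. {x, y} \<in> E)\<^sup>*\<^sup>*"

lemma reachable_sym: "reachable E x y \<Longrightarrow> reachable E y x"
  by (rule sympD[OF symp_rtranclp]) (auto intro: sympI simp: insert_commute)

lemma reachable_mono: "reachable E x y \<Longrightarrow> E \<subseteq> F \<Longrightarrow> reachable F x y"
  by (erule rtranclp_mono[THEN predicate2D, rotated]) blast

lemma rtranclp_closed_set:
  assumes "R\<^sup>*\<^sup>* x y" "x \<in> S" "\<And>p q. p \<in> S \<Longrightarrow> R p q \<Longrightarrow> q \<in> S"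
  shows "y \<in> S"
  using assms(1,2) by (induction rule: rtranclp_induct) (auto intro: assms(3))

lemma reachable_distinct_path:
  assumes "reachable E a b"
  obtains xs where "xs \<noteq> []" "hd xs = a" "last xs = b" "distinct xs"
    "successively (\<lambda>x y. {x, y} \<in> E) xs"
  using assms
proof (induction arbitrary: thesis rule: rtranclp_induct)
  case base
  then show ?case by (auto intro: base.prems[of "[a]"])
next
  case (step b c)
  then obtain xs where xs: "xs \<noteq> []" "hd xs = a" "last xs = b" "distinct xs"
    "successively (\<lambda>x y. {x, y} \<in> E) xs" by blast
  show ?case
  proof (cases "c \<in> set xs")
    case True
    then obtain ys zs where "xs = ys @ c # zs" by (meson split_list)
    with xs show ?thesis
      by (intro step.prems[of "ys @ [c]"]) (auto simp: successively_append_iff hd_append split: if_splits)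
  next
    case False
    with xs step.hyps(2) show ?thesis
      by (intro step.prems[of "xs @ [c]"]) (auto simp: successively_append_iff)
  qed
qed

lemma graph_edge_subset: "graph V E \<Longrightarrow> e \<in> E \<Longrightarrow> e \<subseteq> V"
  unfolding graph_def by fastforce

lemma graph_edgeE:
  assumes "graph V E" "e \<in> E"
  obtains a b where "e = {a, b}" "a \<noteq> b"
  using assms unfolding graph_def by blast

lemma graph_edge_distinct: "graph V E \<Longrightarrow> {a, b} \<in> E \<Longrightarrow> a \<noteq> b"
  unfolding graph_def by (metis doubleton_eq_iff insert_absorb2)

lemma has_cycle_if_reachable_without_edge:
  assumes graph: "graph V E" and ab: "{a, b} \<in> E" and "reachable (E - {{a, b}}) a b"
  shows "has_cycle V E"
proof -
  obtain xs where xs: "xs \<noteq> []" "hd xs = a" "last xs = b" "distinct xs"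
      "successively (\<lambda>x y. {x, y} \<in> E - {{a, b}}) xs"
    using assms(3) by (rule reachable_distinct_path)
  have long: "length xs \<ge> 3"
  proof (rule ccontr)
    assume "\<not> ?thesis"
    moreover have "length xs \<noteq> 0" using xs(1) by simp
    ultimately consider "length xs = 1" | "length xs = 2" by linarith
    then show False
    proof cases
      case 1
      then show False using xs graph_edge_distinct[OF graph ab] by (auto simp: length_Suc_conv)
    next
      case 2
      then obtain x y where "xs = [x, y]" by (auto simp: length_Suc_conv numeral_2_eq_2)
      then show False using xs by simp
    qed
  qed
  have cycle: "{xs ! i, xs ! ((i + 1) mod length xs)} \<in> E" if "i < length xs" for i
  proof (cases "Suc i < length xs")
    case True
    then show ?thesis using successively_nth[OF xs(5) True] by simp
  next
    case False
    then have "Suc i = length xs" using that by simp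
    then have "i = length xs - 1" "(i + 1) mod length xs = 0" by simp_all
    then show ?thesis using xs ab by (simp add: last_conv_nth hd_conv_nth insert_commute)
  qed
  have "set xs \<subseteq> V"
    using cycle graph_edge_subset[OF graph] by (fastforce simp: in_set_conv_nth)
  then show ?thesis unfolding has_cycle_def using long xs(4) cycle by blast
qed

lemma reachable_without_edge_if_has_cycle:
  assumes "has_cycle V E"
  obtains a b where "{a, b} \<in> E" "reachable (E - {{a, b}}) a b"
proof -
  obtain xs where long: "length xs \<ge> 3" and dist: "distinct xs"
    and cycle: "\<forall>i < length xs. {xs ! i, xs ! ((i + 1) mod length xs)} \<in> E"
    using assms unfolding has_cycle_def by blast
  define n where "n = length xs"
  define F where "F = E - {{xs ! 0, xs ! 1}}"
  have first: "{xs ! 0, xs ! 1} \<in> E" using cycle[rule_format, of 0] long by fastforce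
  have "reachable F (xs ! 1) (xs ! (k mod n))" if "1 \<le> k" "k \<le> n" for k
    using that
  proof (induction k rule: dec_induct)
    case base
    then show ?case using long n_def by simp
  next
    case (step k)
    have k: "1 \<le> k" "k < n" using step by simp_all
    have index: "j \<le> 1" if "j < n" "xs ! j \<in> {xs ! 0, xs ! 1}" for j
      using that dist long nth_eq_iff_index_eq[OF dist, of j 0] nth_eq_iff_index_eq[OF dist, of j 1]
      by (force simp: n_def)
    have "{xs ! k, xs ! (Suc k mod n)} \<noteq> {xs ! 0, xs ! 1}"
    proof
      assume edge: "{xs ! k, xs ! (Suc k mod n)} = {xs ! 0, xs ! 1}"
      then have "k = 1" using index[of k] k by auto
      then have "Suc k mod n = 2" using long n_def by simp
      then show False using index[of 2] edge long n_def by auto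
    qed
    then have "{xs ! (k mod n), xs ! (Suc k mod n)} \<in> F"
      using cycle k unfolding F_def n_def by auto
    with step.IH k show ?case by (simp add: rtranclp.rtrancl_into_rtrancl)
  qed
  from this[of n] have "reachable F (xs ! 1) (xs ! 0)" using long n_def by simp
  then show thesis using first that[of "xs ! 1" "xs ! 0"] unfolding F_def by (simp add: insert_commute)
qed

lemma acyclic_iff_all_edges_bridges:
  assumes "graph V E"
  shows "\<not> has_cycle V E \<longleftrightarrow> (\<forall>a b. {a, b} \<in> E \<longrightarrow> \<not> reachable (E - {{a, b}}) a b)"
  using has_cycle_if_reachable_without_edge[OF assms] reachable_without_edge_if_has_cycle by metis

definition other_end :: "'a set \<Rightarrow> 'a \<Rightarrow> 'a" where
  "other_end e a = the_elem (e - {a})"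

lemma other_end [simp]:
  assumes "a \<noteq> b"
  shows "other_end {a, b} a = b" and "other_end {b, a} a = b"
  using assms by (auto simp: other_end_def insert_Diff_if)

lemma induced_perfect_matching_if_involution:
  assumes "\<forall>x\<in>P. mate x \<in> P \<and> mate (mate x) = x \<and> {x, mate x} \<in> E"
  shows "induced_perfect_matching E P"
proof -
  let ?M = "(\<lambda>x. {x, mate x}) ` P"
  have "\<exists>!m. m \<in> ?M \<and> x \<in> m" if "x \<in> P" for x
  proof (rule ex1I[of _ "{x, mate x}"])
    fix m assume "m \<in> ?M \<and> x \<in> m"
    then obtain y where "y \<in> P" "m = {y, mate y}" "x = y \<or> x = mate y" by blast
    then show "m = {x, mate x}" using assms by (auto simp: insert_commute)
  qed (use that in blast)
  then show ?thesis
    unfolding induced_perfect_matching_def using assms by (intro exI[of _ ?M]) auto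
qed

lemma has_cycle_mono: "has_cycle Q EQ \<Longrightarrow> Q \<subseteq> V \<Longrightarrow> EQ \<subseteq> E \<Longrightarrow> has_cycle V E"
  unfolding has_cycle_def by blast

lemma exists_terminal_class:
  assumes "finite R" "R \<noteq> {}" and closed: "\<And>u z. u \<in> R \<Longrightarrow> N u z \<Longrightarrow> z \<in> R"
  obtains Q where "Q \<subseteq> R" "Q \<noteq> {}" "\<And>u. u \<in> Q \<Longrightarrow> {y. N\<^sup>*\<^sup>* u y} = Q"
proof -
  define C where "C u = {y. N\<^sup>*\<^sup>* u y}" for u
  have C_sub: "C u \<subseteq> R" if "u \<in> R" for u
    using rtranclp_closed_set[where S = R] that closed unfolding C_def by blast
  obtain r where "r \<in> R" using assms(2) by blast
  define u0 where "u0 = arg_min (\<lambda>u. card (C u)) (\<lambda>u. u \<in> R)"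
  have u0: "u0 \<in> R" and minimal: "\<And>u. u \<in> R \<Longrightarrow> card (C u0) \<le> card (C u)"
    using arg_min_nat_lemma[of "\<lambda>u. u \<in> R" r "\<lambda>u. card (C u)"] \<open>r \<in> R\<close>
    unfolding u0_def by simp_all
  have "C u = C u0" if "u \<in> C u0" for u
  proof (rule card_seteq)
    show "finite (C u0)" using C_sub[OF u0] assms(1) by (rule finite_subset)
    show "C u \<subseteq> C u0" using that unfolding C_def by (auto intro: rtranclp_trans)
    show "card (C u0) \<le> card (C u)" using minimal C_sub[OF u0] that by blast
  qed
  moreover have "u0 \<in> C u0" unfolding C_def by simp
  ultimately show thesis using C_sub[OF u0] that[of "C u0"] unfolding C_def by blast
qed

definition corona_subtree :: "'a set \<Rightarrow> 'a set set \<Rightarrow> 'a set \<Rightarrow> 'a set set \<Rightarrow> ('a \<Rightarrow> 'a) \<Rightarrow> bool" where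
  "corona_subtree V E Q EQ f \<longleftrightarrow>
     is_tree Q EQ \<and> Q \<subseteq> V - (leaves V E \<union> supports V E) \<and> EQ \<subseteq> E \<and> inj_on f Q \<and>
     (\<forall>x\<in>Q. f x \<in> V - leaves V E \<and> f x \<notin> Q \<and> {x, f x} \<in> E) \<and>
     (\<forall>x\<in>Q. degree E x = degree EQ x + 1)"

definition pendant_attached :: "'a set \<Rightarrow> 'a set set \<Rightarrow> 'a set \<Rightarrow> ('a \<Rightarrow> 'a) \<Rightarrow> bool" where
  "pendant_attached V E Q f \<longleftrightarrow> Q \<subseteq> V - leaves V E \<and> inj_on f Q \<and>
     (\<forall>x\<in>Q. f x \<in> V - leaves V E \<and> f x \<notin> Q \<and> {x, f x} \<in> E \<and>
        (\<forall>z. {x, z} \<in> E \<longrightarrow> z = f x \<or> z \<in> Q))"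

definition inward_edge :: "'a set set \<Rightarrow> ('a \<Rightarrow> 'a) \<Rightarrow> 'a \<Rightarrow> 'a \<Rightarrow> bool" where
  "inward_edge E f u z \<longleftrightarrow> {u, z} \<in> E \<and> z \<noteq> f u"

locale nontrivial_tree =
  fixes V :: "'a set" and E :: "'a set set"
  assumes tree: "is_tree V E" and two_vertices: "card V \<ge> 2"
begin

abbreviation "L \<equiv> leaves V E"

lemma graph: "graph V E"
  using tree unfolding is_tree_def by blast

lemma finite_V: "finite V"
  using graph unfolding graph_def by blast

lemma edge_subset: "e \<in> E \<Longrightarrow> e \<subseteq> V"
  using graph by (rule graph_edge_subset)

lemma finite_E: "finite E"
proof -
  have "E \<subseteq> Pow V" using edge_subset by blast
  then show ?thesis using finite_V by (meson finite_Pow_iff finite_subset)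
qed

lemma edge_distinct: "{u, v} \<in> E \<Longrightarrow> u \<noteq> v"
  using graph by (rule graph_edge_distinct)

lemma edge_other_end:
  assumes "e \<in> E" "u \<in> e"
  obtains v where "e = {u, v}" "u \<noteq> v"
proof -
  from graph assms(1) obtain a b where ab: "e = {a, b}" "a \<noteq> b" by (rule graph_edgeE)
  show thesis
  proof (cases "u = a")
    case True
    then show thesis using that[of b] ab by simp
  next
    case False
    then have "u = b" using ab assms(2) by blast
    then show thesis using that[of a] ab by (simp add: insert_commute)
  qed
qed

lemma edge_bridge: "{u, v} \<in> E \<Longrightarrow> \<not> reachable (E - {{u, v}}) u v"
  using tree acyclic_iff_all_edges_bridges[OF graph] unfolding is_tree_def by blast

lemma vertex_has_edge:
  assumes "u \<in> V"
  obtains e where "e \<in> E" "u \<in> e"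
proof -
  have "card (V - {u}) \<ge> 1" using two_vertices assms by simp
  then obtain v where "v \<in> V - {u}" by (metis card.empty ex_in_conv not_one_le_zero)
  then have v: "v \<in> V" "v \<noteq> u" by simp_all
  have "reachable E u v" using tree assms v unfolding is_tree_def connected_graph_def by blast
  then show thesis using v(2) that by (cases rule: converse_rtranclpE) auto
qed

lemma leaf_in_V: "v \<in> L \<Longrightarrow> v \<in> V"
  unfolding leaves_def by simp

lemma leaf_edge_unique:
  assumes "v \<in> L" "e \<in> E" "v \<in> e" "e' \<in> E" "v \<in> e'"
  shows "e = e'"
proof -
  have "card {e \<in> E. v \<in> e} = 1" using assms(1) unfolding leaves_def degree_def by simp
  then obtain e0 where e0: "{e \<in> E. v \<in> e} = {e0}" by (rule card_1_singletonE)
  have "e \<in> {e \<in> E. v \<in> e}" "e' \<in> {e \<in> E. v \<in> e}" using assms(2-5) by simp_all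
  then show ?thesis unfolding e0 by simp
qed

lemma non_leaf_two_edges:
  assumes "u \<in> V - L"
  obtains e1 e2 where "e1 \<in> E" "e2 \<in> E" "u \<in> e1" "u \<in> e2" "e1 \<noteq> e2"
proof -
  let ?A = "{e \<in> E. u \<in> e}"
  have "?A \<noteq> {}" using assms vertex_has_edge by blast
  moreover have "card ?A \<noteq> 1" using assms unfolding leaves_def degree_def by simp
  ultimately have "\<not> card ?A \<le> 1" using finite_E by (simp add: le_Suc_eq)
  moreover have "finite ?A" using finite_E by simp
  ultimately have "\<not> (\<forall>e1\<in>?A. \<forall>e2\<in>?A. e1 = e2)" using card_le_Suc0_iff_eq[of ?A] by simp
  then obtain e1 e2 where "e1 \<in> ?A" "e2 \<in> ?A" "e1 \<noteq> e2" by blast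
  then show thesis by (intro that[of e1 e2]) simp_all
qed

context
  fixes Q :: "'a set" and f :: "'a \<Rightarrow> 'a"
  assumes Q_sub: "Q \<subseteq> V - L" and Q_nonempty: "Q \<noteq> {}"
    and pendant: "\<And>u. u \<in> Q \<Longrightarrow> {u, f u} \<in> E \<and> f u \<in> V - L"
    and terminal: "\<And>u. u \<in> Q \<Longrightarrow> {y. (inward_edge E f)\<^sup>*\<^sup>* u y} = Q"
begin

lemma in_class_iff: "u \<in> Q \<Longrightarrow> y \<in> Q \<longleftrightarrow> (inward_edge E f)\<^sup>*\<^sup>* u y"
  using terminal by (simp add: set_eq_iff)

lemma class_closed:
  assumes "u \<in> Q" "{u, z} \<in> E" "z \<noteq> f u"
  shows "z \<in> Q"
proof -
  have "inward_edge E f u z" using assms(2,3) by (simp add: inward_edge_def)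
  then show ?thesis using in_class_iff[OF assms(1)] by (blast intro: r_into_rtranclp)
qed

lemma pendant_notin_class:
  assumes u: "u \<in> Q"
  shows "f u \<notin> Q"
proof
  assume "f u \<in> Q"
  then have "(inward_edge E f)\<^sup>*\<^sup>* u (f u)" using in_class_iff[OF u] by simp
  then have "f u \<in> {y. reachable (E - {{u, f u}}) u y}"
  proof (rule rtranclp_closed_set)
    fix p q
    assume p: "p \<in> {y. reachable (E - {{u, f u}}) u y}" and pq: "inward_edge E f p q"
    show "q \<in> {y. reachable (E - {{u, f u}}) u y}"
    proof (cases "{p, q} = {u, f u}")
      case True
      with pq have "q = u" unfolding inward_edge_def by (auto simp: doubleton_eq_iff)
      then show ?thesis by simp
    next
      case False
      with pq have "{p, q} \<in> E - {{u, f u}}" unfolding inward_edge_def by simp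
      with p show ?thesis by (simp add: rtranclp.rtrancl_into_rtrancl)
    qed
  qed simp
  then show False using edge_bridge pendant[OF u] by simp
qed

lemma reachable_in_class:
  assumes "u \<in> Q" "y \<in> Q"
  shows "reachable {e \<in> E. e \<subseteq> Q} u y"
proof -
  have "(inward_edge E f)\<^sup>*\<^sup>* u y" using assms in_class_iff by blast
  then show ?thesis
  proof (induction rule: rtranclp_induct)
    case (step y z)
    then have "y \<in> Q" "z \<in> Q" using in_class_iff[OF assms(1)] by auto
    with step show ?case unfolding inward_edge_def by (simp add: rtranclp.rtrancl_into_rtrancl)
  qed simp
qed

lemma class_tree: "is_tree Q {e \<in> E. e \<subseteq> Q}"
proof -
  have "graph Q {e \<in> E. e \<subseteq> Q}"
    unfolding graph_def
  proof (intro conjI ballI)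
    show "finite Q" using Q_sub finite_V by (meson Diff_subset finite_subset subset_trans)
    fix e assume "e \<in> {e \<in> E. e \<subseteq> Q}"
    then have e: "e \<in> E" "e \<subseteq> Q" by simp_all
    from graph e(1) obtain u v where "e = {u, v}" "u \<noteq> v" by (rule graph_edgeE)
    with e(2) show "\<exists>u v. e = {u, v} \<and> u \<in> Q \<and> v \<in> Q \<and> u \<noteq> v" by blast
  qed
  moreover have "connected_graph Q {e \<in> E. e \<subseteq> Q}"
    unfolding connected_graph_def using reachable_in_class by blast
  moreover have "\<not> has_cycle V E" using tree unfolding is_tree_def by blast
  then have "\<not> has_cycle Q {e \<in> E. e \<subseteq> Q}"
    using has_cycle_mono[of Q "{e \<in> E. e \<subseteq> Q}" V E] Q_sub by blast
  ultimately show ?thesis unfolding is_tree_def using Q_nonempty by blast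
qed

lemma class_avoids_supports: "Q \<inter> supports V E = {}"
proof -
  have False if "x \<in> Q" "v \<in> L" "{v, x} \<in> E" for x v
  proof -
    have "v \<noteq> f x" using pendant[OF \<open>x \<in> Q\<close>] \<open>v \<in> L\<close> by blast
    then have "v \<in> Q" using class_closed[OF \<open>x \<in> Q\<close>] that(3) by (simp add: insert_commute)
    then show False using Q_sub \<open>v \<in> L\<close> by blast
  qed
  then show ?thesis unfolding supports_def by blast
qed

lemma class_pendant_inj: "inj_on f Q"
proof
  fix u u' assume u: "u \<in> Q" and u': "u' \<in> Q" and eq: "f u = f u'"
  show "u = u'"
  proof (rule ccontr)
    assume "u \<noteq> u'"
    have "{e \<in> E. e \<subseteq> Q} \<subseteq> E - {{u, f u}}" using pendant_notin_class[OF u] by blast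
    with reachable_in_class[OF u u'] have "reachable (E - {{u, f u}}) u u'" by (rule reachable_mono)
    moreover have "{u', f u} \<in> E - {{u, f u}}"
      using pendant[OF u'] eq \<open>u \<noteq> u'\<close> by (auto simp: doubleton_eq_iff)
    ultimately have "reachable (E - {{u, f u}}) u (f u)" by (rule rtranclp.rtrancl_into_rtrancl)
    then show False using edge_bridge pendant[OF u] by blast
  qed
qed

lemma class_degree:
  assumes u: "u \<in> Q"
  shows "degree E u = degree {e \<in> E. e \<subseteq> Q} u + 1"
proof -
  let ?EQ = "{e \<in> E. e \<subseteq> Q}"
  have "{e \<in> E. u \<in> e} = insert {u, f u} {e \<in> ?EQ. u \<in> e}"
  proof (intro equalityI subsetI)
    fix e assume "e \<in> {e \<in> E. u \<in> e}"
    then have e: "e \<in> E" "u \<in> e" by simp_all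
    then obtain z where z: "e = {u, z}" by (rule edge_other_end)
    then have "z = f u \<or> z \<in> Q" using class_closed[OF u] e by blast
    then show "e \<in> insert {u, f u} {e \<in> ?EQ. u \<in> e}" using e z u by auto
  qed (use pendant[OF u] in auto)
  moreover have "{u, f u} \<notin> {e \<in> ?EQ. u \<in> e}" using pendant_notin_class[OF u] by blast
  moreover have "finite {e \<in> ?EQ. u \<in> e}" using finite_E by simp
  ultimately show ?thesis unfolding degree_def by simp
qed

lemma corona_subtree_of_class: "corona_subtree V E Q {e \<in> E. e \<subseteq> Q} f"
  unfolding corona_subtree_def
  using class_tree Q_sub class_avoids_supports class_pendant_inj pendant pendant_notin_class class_degree
  by blast

end

lemma exists_corona_subtree:
  assumes "R \<subseteq> V - L" "R \<noteq> {}"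
    and "\<And>u. u \<in> R \<Longrightarrow> {u, f u} \<in> E \<and> f u \<in> V - L"
    and "\<And>u z. u \<in> R \<Longrightarrow> inward_edge E f u z \<Longrightarrow> z \<in> R"
  shows "\<exists>Q EQ. corona_subtree V E Q EQ f"
proof -
  have "finite R" using assms(1) finite_V finite_subset by blast
  then obtain Q where "Q \<subseteq> R" "Q \<noteq> {}" "\<And>u. u \<in> Q \<Longrightarrow> {y. (inward_edge E f)\<^sup>*\<^sup>* u y} = Q"
    using assms(2,4) exists_terminal_class by metis
  then have "corona_subtree V E Q {e \<in> E. e \<subseteq> Q} f"
    using assms(1,3) by (intro corona_subtree_of_class) auto
  then show ?thesis by blast
qed

lemma corona_subtree_pendant_attached:
  assumes "corona_subtree V E Q EQ f"
  shows "pendant_attached V E Q f"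
proof -
  have graph_Q: "graph Q EQ" and EQ_sub: "EQ \<subseteq> E"
    and pendant: "\<And>x. x \<in> Q \<Longrightarrow> f x \<in> V - L \<and> f x \<notin> Q \<and> {x, f x} \<in> E"
    and degree: "\<And>x. x \<in> Q \<Longrightarrow> degree E x = degree EQ x + 1"
    using assms unfolding corona_subtree_def is_tree_def by blast+
  have "z = f x \<or> z \<in> Q" if x: "x \<in> Q" and xz: "{x, z} \<in> E" for x z
  proof -
    let ?A = "{e \<in> E. x \<in> e}" and ?B = "{e \<in> EQ. x \<in> e}"
    have sub: "insert {x, f x} ?B \<subseteq> ?A" using EQ_sub pendant[OF x] by blast
    have "{x, f x} \<notin> ?B" using graph_edge_subset[OF graph_Q] pendant[OF x] by blast
    moreover have "finite ?B" using finite_E EQ_sub by (auto intro: finite_subset)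
    ultimately have "card (insert {x, f x} ?B) = card ?A"
      using degree[OF x] unfolding degree_def by simp
    then have A_eq: "insert {x, f x} ?B = ?A" using sub finite_E by (intro card_seteq) auto
    have "{x, z} \<in> insert {x, f x} ?B" unfolding A_eq using xz by simp
    then have "{x, z} = {x, f x} \<or> {x, z} \<in> EQ" by simp
    then show ?thesis using graph_edge_subset[OF graph_Q] by (auto simp: doubleton_eq_iff)
  qed
  then show ?thesis using assms pendant unfolding corona_subtree_def pendant_attached_def by blast
qed

lemma corona_subtree_inner_edge:
  assumes "corona_subtree V E Q EQ f"
  obtains a b where "{a, b} \<in> E" "a \<in> Q" "b \<in> Q"
proof -
  have tree_Q: "is_tree Q EQ" and Q_sub: "Q \<subseteq> V - (L \<union> supports V E)" and "EQ \<subseteq> E"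
    and degree: "\<And>x. x \<in> Q \<Longrightarrow> degree E x = degree EQ x + 1"
    using assms unfolding corona_subtree_def by blast+
  obtain x where x: "x \<in> Q" using tree_Q unfolding is_tree_def by blast
  have "degree EQ x \<noteq> 0"
  proof
    assume "degree EQ x = 0"
    then have "x \<in> L" using degree[OF x] Q_sub x unfolding leaves_def by auto
    then show False using Q_sub x by blast
  qed
  then obtain e where e: "e \<in> EQ" "x \<in> e" unfolding degree_def by (metis (no_types, lifting) Collect_empty_eq card.empty)
  then obtain z where "e = {x, z}" using \<open>EQ \<subseteq> E\<close> by (blast elim: edge_other_end)
  moreover have "e \<subseteq> Q" using tree_Q e graph_edge_subset unfolding is_tree_def by blast
  ultimately show thesis using that e \<open>EQ \<subseteq> E\<close> by blast
qed

end

primrec base_vertex :: "'a s2v \<Rightarrow> 'a" where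
  "base_vertex (Orig u) = u"
| "base_vertex (LCopy v i) = v"
| "base_vertex (Sub u e) = u"

locale two_subdivision = nontrivial_tree +
  fixes \<alpha> :: "'a \<Rightarrow> nat"
begin

abbreviation "V2 \<equiv> S2V V E \<alpha>"
abbreviation "E2 \<equiv> S2E V E \<alpha>"

lemma S2V_iff [simp]:
  "Orig u \<in> V2 \<longleftrightarrow> u \<in> V - L"
  "LCopy v i \<in> V2 \<longleftrightarrow> v \<in> L \<and> 1 \<le> i \<and> i \<le> \<alpha> v"
  "Sub u e \<in> V2 \<longleftrightarrow> e \<in> E \<and> u \<in> e"
  unfolding S2V_def by auto

lemma S2E_cases [consumes 1, case_names middle orig copy]:
  assumes "g \<in> E2"
  obtains (middle) u v where "{u, v} \<in> E" "g = {Sub u {u, v}, Sub v {u, v}}"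
  | (orig) u e where "u \<in> V - L" "e \<in> E" "u \<in> e" "g = {Orig u, Sub u e}"
  | (copy) v e i where "v \<in> L" "e \<in> E" "v \<in> e" "1 \<le> i" "i \<le> \<alpha> v" "g = {Sub v e, LCopy v i}"
  using assms unfolding S2E_def by blast

lemma middle_edge: "{u, v} \<in> E \<Longrightarrow> {Sub u {u, v}, Sub v {u, v}} \<in> E2"
  unfolding S2E_def using edge_distinct
  by (intro UnI1 CollectI exI[of _ u] exI[of _ v] exI[of _ "{u, v}"]) simp

lemma orig_edge: "u \<in> V - L \<Longrightarrow> e \<in> E \<Longrightarrow> u \<in> e \<Longrightarrow> {Orig u, Sub u e} \<in> E2"
  unfolding S2E_def by (rule UnI1, rule UnI2) blast

lemma copy_edge:
  "v \<in> L \<Longrightarrow> e \<in> E \<Longrightarrow> v \<in> e \<Longrightarrow> 1 \<le> i \<Longrightarrow> i \<le> \<alpha> v \<Longrightarrow> {Sub v e, LCopy v i} \<in> E2"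
  unfolding S2E_def by (rule UnI2) blast

lemma Orig_adj: "{Orig u, x} \<in> E2 \<longleftrightarrow> u \<in> V - L \<and> (\<exists>e. x = Sub u e \<and> e \<in> E \<and> u \<in> e)"
proof
  assume "{Orig u, x} \<in> E2"
  then show "u \<in> V - L \<and> (\<exists>e. x = Sub u e \<and> e \<in> E \<and> u \<in> e)"
    by (cases rule: S2E_cases) (auto simp: doubleton_eq_iff)
qed (auto intro: orig_edge)

lemma LCopy_adj:
  "{LCopy v i, x} \<in> E2 \<longleftrightarrow> v \<in> L \<and> 1 \<le> i \<and> i \<le> \<alpha> v \<and> (\<exists>e. x = Sub v e \<and> e \<in> E \<and> v \<in> e)"
proof
  assume "{LCopy v i, x} \<in> E2"
  then show "v \<in> L \<and> 1 \<le> i \<and> i \<le> \<alpha> v \<and> (\<exists>e. x = Sub v e \<and> e \<in> E \<and> v \<in> e)"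
    by (cases rule: S2E_cases) (auto simp: doubleton_eq_iff)
qed (auto simp: insert_commute intro: copy_edge)

lemma Sub_adj:
  "{Sub u e, x} \<in> E2 \<longleftrightarrow> e \<in> E \<and> u \<in> e \<and>
     (x = Sub (other_end e u) e \<or> (x = Orig u \<and> u \<notin> L) \<or>
      (\<exists>i. x = LCopy u i \<and> u \<in> L \<and> 1 \<le> i \<and> i \<le> \<alpha> u))"
proof
  assume "{Sub u e, x} \<in> E2"
  then show "e \<in> E \<and> u \<in> e \<and> (x = Sub (other_end e u) e \<or> (x = Orig u \<and> u \<notin> L) \<or>
      (\<exists>i. x = LCopy u i \<and> u \<in> L \<and> 1 \<le> i \<and> i \<le> \<alpha> u))"
    by (cases rule: S2E_cases) (auto simp: doubleton_eq_iff dest: edge_distinct)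
next
  assume x: "e \<in> E \<and> u \<in> e \<and> (x = Sub (other_end e u) e \<or> (x = Orig u \<and> u \<notin> L) \<or>
      (\<exists>i. x = LCopy u i \<and> u \<in> L \<and> 1 \<le> i \<and> i \<le> \<alpha> u))"
  then obtain v where v: "e = {u, v}" "u \<noteq> v" using edge_other_end by blast
  have "u \<in> V" using x edge_subset by blast
  with x v show "{Sub u e, x} \<in> E2"
    using middle_edge[of u v] orig_edge[of u e] copy_edge[of u e] by (auto simp: insert_commute)
qed

lemma Sub_adjE:
  assumes "{Sub u {u, v}, x} \<in> E2" "u \<noteq> v"
  obtains "x = Sub v {u, v}" | "x = Orig u" "u \<notin> L" | i where "x = LCopy u i" "u \<in> L"
  using assms by (auto simp: Sub_adj)

lemma finite_V2: "finite V2"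
proof -
  have "V2 \<subseteq> Orig ` V \<union> (\<Union>v\<in>V. LCopy v ` {1..\<alpha> v}) \<union> (\<lambda>(u, e). Sub u e) ` (V \<times> E)"
    unfolding S2V_def using edge_subset leaf_in_V by fastforce
  then show ?thesis by (rule finite_subset) (simp add: finite_V finite_E)
qed

lemma graph_S2: "graph V2 E2"
  unfolding graph_def
proof (intro conjI ballI finite_V2)
  fix g assume "g \<in> E2"
  then show "\<exists>a b. g = {a, b} \<and> a \<in> V2 \<and> b \<in> V2 \<and> a \<noteq> b"
  proof (cases rule: S2E_cases)
    case (middle u v)
    then show ?thesis using edge_distinct by (intro exI[of _ "Sub u {u, v}"] exI[of _ "Sub v {u, v}"]) simp
  next
    case (orig u e)
    then show ?thesis by (intro exI[of _ "Orig u"] exI[of _ "Sub u e"]) simp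
  next
    case (copy v e i)
    then show ?thesis by (intro exI[of _ "Sub v e"] exI[of _ "LCopy v i"]) simp
  qed
qed

lemma reachable_Sub_same_vertex:
  assumes "e \<in> E" "e' \<in> E" "u \<in> e" "u \<in> e'"
  shows "reachable E2 (Sub u e) (Sub u e')"
proof (cases "u \<in> L")
  case True
  then show ?thesis using leaf_edge_unique assms by blast
next
  case False
  then have "u \<in> V - L" using assms edge_subset by blast
  then have "{Sub u e, Orig u} \<in> E2" "{Orig u, Sub u e'} \<in> E2"
    using orig_edge assms by (auto simp: insert_commute)
  then show ?thesis by (meson r_into_rtranclp rtranclp_trans)
qed

lemma reachable_Sub:
  assumes "reachable E u w" "e \<in> E" "u \<in> e" "e' \<in> E" "w \<in> e'"
  shows "reachable E2 (Sub u e) (Sub w e')"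
  using assms(1,4,5)
proof (induction arbitrary: e' rule: rtranclp_induct)
  case base
  then show ?case using reachable_Sub_same_vertex assms(2,3) by blast
next
  case (step w w')
  have "reachable E2 (Sub u e) (Sub w {w, w'})" using step.IH step.hyps(2) by simp
  moreover have "{Sub w {w, w'}, Sub w' {w, w'}} \<in> E2" using middle_edge step.hyps(2) by blast
  moreover have "reachable E2 (Sub w' {w, w'}) (Sub w' e')"
    using reachable_Sub_same_vertex step.hyps(2) step.prems by simp
  ultimately show ?case by (meson rtranclp.rtrancl_into_rtrancl rtranclp_trans)
qed

lemma reachable_from_Sub:
  assumes "x \<in> V2"
  obtains u e where "e \<in> E" "u \<in> e" "reachable E2 (Sub u e) x"
proof (cases x)
  case (Orig u)
  with assms have "u \<in> V - L" by simp
  moreover obtain e where e: "e \<in> E" "u \<in> e" using \<open>u \<in> V - L\<close> vertex_has_edge by blast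
  ultimately have "{Sub u e, x} \<in> E2" using orig_edge Orig by (simp add: insert_commute)
  then show thesis using e by (intro that) (auto intro: r_into_rtranclp)
next
  case (LCopy v i)
  with assms have v: "v \<in> L" "1 \<le> i" "i \<le> \<alpha> v" by simp_all
  moreover obtain e where e: "e \<in> E" "v \<in> e" using v(1) leaf_in_V vertex_has_edge by blast
  ultimately have "{Sub v e, x} \<in> E2" using copy_edge LCopy by simp
  then show thesis using e by (intro that) (auto intro: r_into_rtranclp)
next
  case (Sub u e)
  with assms show thesis using that[of e u] by simp
qed

lemma connected_S2: "connected_graph V2 E2"
  unfolding connected_graph_def
proof (intro ballI)
  fix x y assume "x \<in> V2" "y \<in> V2"
  then obtain u e w e' where ue: "e \<in> E" "u \<in> e" "reachable E2 (Sub u e) x"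
    and we: "e' \<in> E" "w \<in> e'" "reachable E2 (Sub w e') y"
    by (metis reachable_from_Sub)
  have "reachable E u w"
    using tree ue we edge_subset unfolding is_tree_def connected_graph_def by blast
  then have "reachable E2 (Sub u e) (Sub w e')" using ue we by (intro reachable_Sub)
  then show "reachable E2 x y"
    using reachable_sym[OF ue(3)] we(3) by (meson rtranclp_trans)
qed

lemma base_vertex_step:
  assumes "{p, q} \<in> E2" "{p, q} \<noteq> {Sub u {u, v}, Sub v {u, v}}"
  shows "reachable (E - {{u, v}}) (base_vertex p) (base_vertex q)"
  using assms(1)
proof (cases rule: S2E_cases)
  case (middle a b)
  with assms(2) have "{a, b} \<noteq> {u, v}" by (auto simp: doubleton_eq_iff insert_commute)
  moreover from middle have "{base_vertex p, base_vertex q} = {a, b}"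
    by (auto simp: doubleton_eq_iff)
  ultimately show ?thesis using middle(1) by (simp add: r_into_rtranclp)
qed (auto simp: doubleton_eq_iff)

lemma reachable_base_vertex:
  assumes "reachable (E2 - {{Sub u {u, v}, Sub v {u, v}}}) p q"
  shows "reachable (E - {{u, v}}) (base_vertex p) (base_vertex q)"
  using assms
proof (induction rule: rtranclp_induct)
  case (step q r)
  then have "reachable (E - {{u, v}}) (base_vertex q) (base_vertex r)"
    using base_vertex_step[of q r u v] by blast
  with step.IH show ?case by (rule rtranclp_trans)
qed simp

lemma middle_edge_bridge:
  assumes "{u, v} \<in> E"
  shows "\<not> reachable (E2 - {{Sub u {u, v}, Sub v {u, v}}}) (Sub u {u, v}) (Sub v {u, v})"
  using reachable_base_vertex edge_bridge[OF assms] by fastforce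

lemma orig_edge_bridge:
  assumes u: "u \<in> V - L" and e: "e \<in> E" "u \<in> e"
  shows "\<not> reachable (E2 - {{Orig u, Sub u e}}) (Orig u) (Sub u e)"
proof
  obtain v where v: "e = {u, v}" "u \<noteq> v" using e by (rule edge_other_end)
  define S where "S = {p. reachable (E - {e}) u (base_vertex p) \<and> p \<noteq> Sub u e}"
  assume "reachable (E2 - {{Orig u, Sub u e}}) (Orig u) (Sub u e)"
  then have "Sub u e \<in> S"
  proof (rule rtranclp_closed_set)
    show "Orig u \<in> S" by (simp add: S_def)
  next
    fix p q assume p: "p \<in> S" and pq: "{p, q} \<in> E2 - {{Orig u, Sub u e}}"
    have "p \<noteq> Sub v e" using p edge_bridge e v by (auto simp: S_def)
    then have "{p, q} \<noteq> {Sub u {u, v}, Sub v {u, v}}" using p v by (auto simp: S_def doubleton_eq_iff)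
    then have "reachable (E - {e}) (base_vertex p) (base_vertex q)"
      using base_vertex_step pq v by blast
    moreover have "q \<noteq> Sub u e"
    proof
      assume "q = Sub u e"
      then have "{Sub u e, p} \<in> E2" "p \<noteq> Orig u" using pq by (auto simp: insert_commute)
      then show False using \<open>p \<noteq> Sub v e\<close> u v by (auto simp: Sub_adj)
    qed
    ultimately show "q \<in> S" using p unfolding S_def by (auto intro: rtranclp_trans)
  qed
  then show False by (simp add: S_def)
qed

lemma copy_edge_bridge:
  assumes "v \<in> L" "e \<in> E" "v \<in> e"
  shows "\<not> reachable (E2 - {{Sub v e, LCopy v i}}) (LCopy v i) (Sub v e)"
proof
  assume "reachable (E2 - {{Sub v e, LCopy v i}}) (LCopy v i) (Sub v e)"
  then have "Sub v e \<in> {LCopy v i}"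
  proof (rule rtranclp_closed_set)
    fix p q assume p: "p \<in> {LCopy v i}" and pq: "{p, q} \<in> E2 - {{Sub v e, LCopy v i}}"
    then obtain e' where "q = Sub v e'" "e' \<in> E" "v \<in> e'" by (auto simp: LCopy_adj)
    then have "q = Sub v e" using leaf_edge_unique assms by blast
    then show "q \<in> {LCopy v i}" using p pq by (simp add: insert_commute)
  qed simp
  then show False by simp
qed

lemma S2_edge_bridge:
  assumes "{a, b} \<in> E2"
  shows "\<not> reachable (E2 - {{a, b}}) a b"
proof -
  have "\<exists>x y. {a, b} = {x, y} \<and> \<not> reachable (E2 - {{a, b}}) x y"
    using assms
  proof (cases rule: S2E_cases)
    case (middle u v)
    show ?thesis unfolding middle(2) using middle_edge_bridge[OF middle(1)] by blast
  next
    case (orig u e)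
    show ?thesis unfolding orig(4) using orig_edge_bridge[OF orig(1-3)] by blast
  next
    case (copy v e i)
    have "{Sub v e, LCopy v i} = {LCopy v i, Sub v e}" by (rule insert_commute)
    then show ?thesis unfolding copy(6) using copy_edge_bridge[OF copy(1-3), of i] by metis
  qed
  then obtain x y where xy: "{a, b} = {x, y}" "\<not> reachable (E2 - {{a, b}}) x y" by blast
  from xy(1) have "x = a \<and> y = b \<or> x = b \<and> y = a" by (auto simp: doubleton_eq_iff)
  then show ?thesis using xy(2) reachable_sym by metis
qed

lemma tree_S2: "is_tree V2 E2"
proof -
  have "\<not> has_cycle V2 E2" using acyclic_iff_all_edges_bridges[OF graph_S2] S2_edge_bridge by blast
  moreover obtain u where "u \<in> V" using two_vertices by fastforce
  then obtain e where "e \<in> E" "u \<in> e" by (rule vertex_has_edge)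
  then have "V2 \<noteq> {}" by (metis S2V_iff(3) empty_iff)
  ultimately show ?thesis unfolding is_tree_def using graph_S2 connected_S2 by blast
qed

end

definition inner_edges :: "'a set \<Rightarrow> 'a s2v set set" where
  "inner_edges Q = {{Sub a {a, b}, Sub b {a, b}} | a b. a \<in> Q \<and> b \<in> Q}"

primrec mate :: "'a set \<Rightarrow> ('a \<Rightarrow> 'a) \<Rightarrow> 'a s2v \<Rightarrow> 'a s2v" where
  "mate Q f (Orig u) = Sub u {u, f u}"
| "mate Q f (Sub a e) = (if a \<in> Q then Orig a else Sub (other_end e a) e)"
| "mate Q f (LCopy v i) = LCopy v i" \<comment> \<open>irrelevant: leaf copies are never paired\<close>

lemma not_in_inner_edges [simp]:
  "{Orig u, x} \<notin> inner_edges Q" "{x, Orig u} \<notin> inner_edges Q"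
  "{LCopy v i, x} \<notin> inner_edges Q" "{x, LCopy v i} \<notin> inner_edges Q"
  "a \<notin> Q \<Longrightarrow> {Sub a e, x} \<notin> inner_edges Q" "a \<notin> Q \<Longrightarrow> {x, Sub a e} \<notin> inner_edges Q"
  unfolding inner_edges_def by (auto simp: doubleton_eq_iff)

locale positive_two_subdivision = two_subdivision +
  assumes alpha_pos: "\<forall>v \<in> leaves V E. \<alpha> v \<ge> 1"
begin

definition paired_part :: "'a set \<Rightarrow> 'a s2v set" where
  "paired_part Q = Orig ` Q \<union> {Sub a e | a e. e \<in> E \<and> a \<in> e \<and> e \<inter> Q \<subseteq> {a}}"

lemma LCopy_one_in_S2V: "v \<in> L \<Longrightarrow> LCopy v 1 \<in> V2"
  using alpha_pos by simp

context
  fixes Q :: "'a set" and f :: "'a \<Rightarrow> 'a"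
  assumes attached: "pendant_attached V E Q f"
begin

abbreviation "P \<equiv> paired_part Q"

lemma attached_subset: "Q \<subseteq> V - L"
  using attached unfolding pendant_attached_def by blast

lemma attached_pendant: "x \<in> Q \<Longrightarrow> f x \<in> V - L \<and> f x \<notin> Q \<and> {x, f x} \<in> E"
  using attached unfolding pendant_attached_def by blast

lemma attached_closed: "x \<in> Q \<Longrightarrow> {x, z} \<in> E \<Longrightarrow> z \<noteq> f x \<Longrightarrow> z \<in> Q"
  using attached unfolding pendant_attached_def by blast

lemma Sub_in_paired_part_iff: "{a, b} \<in> E \<Longrightarrow> Sub a {a, b} \<in> P \<longleftrightarrow> b \<notin> Q"
  using edge_distinct unfolding paired_part_def by auto

lemma Orig_in_paired_part_iff [simp]: "Orig u \<in> P \<longleftrightarrow> u \<in> Q"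
  unfolding paired_part_def by auto

lemma LCopy_notin_paired_part [simp]: "LCopy v i \<notin> P"
  unfolding paired_part_def by auto

lemma paired_part_subset: "P \<subseteq> V2"
  using attached_subset unfolding paired_part_def by auto

lemma attached_has_inner_neighbour:
  assumes "x \<in> Q"
  obtains z where "z \<in> Q" "{x, z} \<in> E"
proof -
  have "x \<in> V - L" using attached_subset assms by blast
  then obtain e1 e2 where e: "e1 \<in> E" "e2 \<in> E" "x \<in> e1" "x \<in> e2" "e1 \<noteq> e2"
    by (rule non_leaf_two_edges)
  obtain z1 z2 where z: "e1 = {x, z1}" "e2 = {x, z2}"
    using e by (metis edge_other_end)
  then have "z1 \<noteq> f x \<or> z2 \<noteq> f x" using e(5) by blast
  then show thesis using that attached_closed[OF assms] e z by blast
qed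

lemma outer_vertex_has_outer_neighbour:
  assumes "u \<in> V - L" "u \<notin> Q"
  obtains b where "{u, b} \<in> E" "b \<notin> Q"
proof -
  obtain e1 e2 where e: "e1 \<in> E" "e2 \<in> E" "u \<in> e1" "u \<in> e2" "e1 \<noteq> e2"
    using assms(1) by (rule non_leaf_two_edges)
  obtain b1 b2 where b: "e1 = {u, b1}" "e2 = {u, b2}"
    using e by (metis edge_other_end)
  have "b1 \<notin> Q \<or> b2 \<notin> Q"
  proof (rule ccontr)
    assume "\<not> ?thesis"
    then have in_Q: "b1 \<in> Q" "b2 \<in> Q" by simp_all
    then have "u = f b1" "u = f b2"
      using attached_closed assms(2) e b by (metis insert_commute)+
    then have "b1 = b2" using attached in_Q unfolding pendant_attached_def inj_on_def by auto
    then show False using e b by simp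
  qed
  then show thesis using that e b by blast
qed

lemma leaf_neighbour_notin_Q: "v \<in> L \<Longrightarrow> {v, b} \<in> E \<Longrightarrow> b \<notin> Q"
  using attached_closed attached_pendant attached_subset by (metis DiffD2 insert_commute subsetD)

lemma Sub_in_paired_part_has_complement_neighbour:
  assumes x: "Sub a e \<in> P"
  shows "\<exists>d \<in> V2 - P. {d, Sub a e} \<in> E2 - inner_edges Q"
proof -
  have e: "e \<in> E" "a \<in> e" using x paired_part_subset by auto
  then obtain b where b: "e = {a, b}" "a \<noteq> b" by (rule edge_other_end)
  have b_out: "b \<notin> Q" using Sub_in_paired_part_iff x b e by simp
  show ?thesis
  proof (cases "a \<in> Q")
    case True
    have "e = {b, a}" using b by (simp add: insert_commute)
    then have "Sub b e \<in> V2 - P" using Sub_in_paired_part_iff[of b a] True e by simp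
    moreover have "{Sub a e, Sub b e} \<in> E2" using middle_edge e b by simp
    then have "{Sub b e, Sub a e} \<in> E2" by (simp add: insert_commute)
    ultimately show ?thesis using b_out by auto
  next
    case a_out: False
    show ?thesis
    proof (cases "a \<in> L")
      case True
      have "LCopy a 1 \<in> V2 - P" using LCopy_one_in_S2V True by simp
      moreover have "{Sub a e, LCopy a 1} \<in> E2" using copy_edge[OF True e] alpha_pos True by simp
      then have "{LCopy a 1, Sub a e} \<in> E2" by (simp add: insert_commute)
      ultimately show ?thesis by auto
    next
      case False
      then have "Orig a \<in> V2 - P" using a_out e edge_subset by auto
      moreover have "{Orig a, Sub a e} \<in> E2" using orig_edge e False edge_subset by blast
      ultimately show ?thesis by auto
    qed
  qed
qed

lemma paired_part_complement_dominates: "dominating V2 (E2 - inner_edges Q) (V2 - P)"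
  unfolding dominating_def
proof (intro conjI ballI)
  fix x assume "x \<in> V2 - (V2 - P)"
  then have x: "x \<in> P" by simp
  show "\<exists>d \<in> V2 - P. {d, x} \<in> E2 - inner_edges Q"
  proof (cases x)
    case (Orig u)
    with x have u: "u \<in> Q" by simp
    then obtain z where z: "z \<in> Q" "{u, z} \<in> E" by (rule attached_has_inner_neighbour)
    have "Sub u {u, z} \<in> V2 - P" using z Sub_in_paired_part_iff by simp
    moreover have "{Orig u, Sub u {u, z}} \<in> E2" using orig_edge attached_subset u z by blast
    then have "{Sub u {u, z}, x} \<in> E2" using Orig by (simp add: insert_commute)
    ultimately show ?thesis using Orig by auto
  next
    case (Sub a e)
    then show ?thesis using x Sub_in_paired_part_has_complement_neighbour by simp
  qed (use x in simp)
qed simp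

lemma Sub_outside_paired_part_has_paired_neighbour:
  assumes "Sub a e \<in> V2 - P"
  shows "\<exists>p \<in> P. {p, Sub a e} \<in> E2 - inner_edges Q"
proof -
  have e: "e \<in> E" "a \<in> e" "Sub a e \<notin> P" using assms by simp_all
  obtain b where b: "e = {a, b}" "a \<noteq> b" using e(1,2) by (rule edge_other_end)
  have b_in: "b \<in> Q" using Sub_in_paired_part_iff e b by simp
  show ?thesis
  proof (cases "a \<in> Q")
    case True
    then have "Orig a \<in> P" by simp
    moreover have "{Orig a, Sub a e} \<in> E2" using orig_edge True attached_subset e by blast
    ultimately show ?thesis by auto
  next
    case False
    have "e = {b, a}" using b by (simp add: insert_commute)
    then have "Sub b e \<in> P" using Sub_in_paired_part_iff[of b a] False e by simp
    moreover have "{Sub a e, Sub b e} \<in> E2" using middle_edge e b by simp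
    then have "{Sub b e, Sub a e} \<in> E2" by (simp add: insert_commute)
    moreover have "{Sub b e, Sub a e} \<notin> inner_edges Q" using False by simp
    ultimately show ?thesis by auto
  qed
qed

lemma paired_part_dominates: "dominating V2 (E2 - inner_edges Q) P"
  unfolding dominating_def
proof (intro conjI ballI paired_part_subset)
  fix x assume x: "x \<in> V2 - P"
  show "\<exists>p \<in> P. {p, x} \<in> E2 - inner_edges Q"
  proof (cases x)
    case (Orig u)
    with x have u: "u \<in> V - L" "u \<notin> Q" by simp_all
    then obtain b where b: "{u, b} \<in> E" "b \<notin> Q" by (rule outer_vertex_has_outer_neighbour)
    then have "Sub u {u, b} \<in> P" using Sub_in_paired_part_iff by simp
    moreover have "{Orig u, Sub u {u, b}} \<in> E2" using orig_edge u b by blast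
    then have "{Sub u {u, b}, x} \<in> E2" using Orig by (simp add: insert_commute)
    ultimately show ?thesis using Orig by auto
  next
    case (LCopy v i)
    with x have v: "v \<in> L" "1 \<le> i" "i \<le> \<alpha> v" by simp_all
    obtain e where e: "e \<in> E" "v \<in> e" using v(1) leaf_in_V by (blast elim: vertex_has_edge)
    then obtain b where b: "e = {v, b}" "v \<noteq> b" by (rule edge_other_end)
    then have "Sub v e \<in> P" using Sub_in_paired_part_iff leaf_neighbour_notin_Q v(1) e by simp
    moreover have "{Sub v e, x} \<in> E2" using copy_edge v e LCopy by simp
    ultimately show ?thesis using LCopy by auto
  next
    case (Sub a e)
    then show ?thesis using x Sub_outside_paired_part_has_paired_neighbour by simp
  qed
qed

lemma paired_part_perfect_matching: "induced_perfect_matching (E2 - inner_edges Q) P"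
proof (rule induced_perfect_matching_if_involution[where mate = "mate Q f"], intro ballI)
  fix x assume x: "x \<in> P"
  show "mate Q f x \<in> P \<and> mate Q f (mate Q f x) = x \<and> {x, mate Q f x} \<in> E2 - inner_edges Q"
  proof (cases x)
    case (Orig u)
    with x have u: "u \<in> Q" by simp
    then have "Sub u {u, f u} \<in> P" using attached_pendant Sub_in_paired_part_iff by simp
    moreover have "{Orig u, Sub u {u, f u}} \<in> E2" using orig_edge attached_subset u attached_pendant by blast
    ultimately show ?thesis using Orig u by simp
  next
    case (Sub a e)
    with x have e: "e \<in> E" "a \<in> e" by (auto simp: paired_part_def)
    then obtain b where b: "e = {a, b}" "a \<noteq> b" by (rule edge_other_end)
    have b_out: "b \<notin> Q" using Sub_in_paired_part_iff x Sub b e by simp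
    show ?thesis
    proof (cases "a \<in> Q")
      case True
      then have "b = f a" using attached_closed e b b_out by blast
      moreover have "{Orig a, Sub a e} \<in> E2" using orig_edge True attached_subset e by blast
      ultimately show ?thesis using Sub True b by (simp add: insert_commute)
    next
      case False
      have e': "e = {b, a}" using b by (simp add: insert_commute)
      then have "Sub b e \<in> P" using Sub_in_paired_part_iff[of b a] False e by simp
      moreover have "{Sub a e, Sub b e} \<in> E2" using middle_edge e b by simp
      ultimately show ?thesis using Sub False b b_out by simp
    qed
  qed (use x in simp)
qed

lemma dpdp_without_inner_edges: "dpdp V2 (E2 - inner_edges Q)"
  unfolding dpdp_def paired_dominating_def
  using paired_part_complement_dominates paired_part_dominates paired_part_perfect_matching
    paired_part_subset
  by (intro exI[of _ "V2 - P"] exI[of _ P]) blast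

end

end

locale spanning_dpdp = positive_two_subdivision +
  fixes E' :: "'a s2v set set" and D P :: "'a s2v set" and M :: "'a s2v set set"
  assumes subgraph: "E' \<subseteq> E2"
    and partition: "D \<inter> P = {}" "D \<union> P = V2"
    and D_dominating: "dominating V2 E' D" and P_dominating: "dominating V2 E' P"
    and matching: "M \<subseteq> E'" "\<forall>m\<in>M. m \<subseteq> P" "\<forall>x\<in>P. \<exists>!m. m \<in> M \<and> x \<in> m"
begin

lemma D_neighbour: "x \<in> P \<Longrightarrow> \<exists>d\<in>D. {d, x} \<in> E'"
  using D_dominating partition unfolding dominating_def by blast

lemma P_neighbour: "x \<in> V2 \<Longrightarrow> x \<notin> P \<Longrightarrow> \<exists>p\<in>P. {p, x} \<in> E'"
  using P_dominating unfolding dominating_def by blast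

lemma matched: "x \<in> P \<Longrightarrow> \<exists>y\<in>P. {x, y} \<in> M"
proof -
  assume x: "x \<in> P"
  then obtain m where m: "m \<in> M" "x \<in> m" using matching(3) by blast
  have "m \<in> E2" using m(1) matching(1) subgraph by blast
  with graph_S2 obtain a b where ab: "m = {a, b}" by (rule graph_edgeE)
  have "m \<subseteq> P" using matching(2) m by blast
  show ?thesis
  proof (cases "x = a")
    case True
    then show ?thesis using ab m \<open>m \<subseteq> P\<close> by blast
  next
    case False
    then have "m = {x, a}" using ab m(2) by (auto simp: insert_commute)
    then show ?thesis using m \<open>m \<subseteq> P\<close> by blast
  qed
qed

lemma matched_in_S2: "{x, y} \<in> M \<Longrightarrow> {x, y} \<in> E2"
  using matching(1) subgraph by blast

lemma matched_unique:
  assumes "{x, y} \<in> M" "{x, z} \<in> M"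
  shows "y = z"
proof -
  have "x \<in> P" using assms(1) matching(2) by blast
  then have "\<exists>!m. m \<in> M \<and> x \<in> m" using matching(3) by simp
  then obtain m where m: "\<forall>m'. m' \<in> M \<and> x \<in> m' \<longrightarrow> m' = m" by (rule ex1E) simp
  have "{x, y} = m" "{x, z} = m" using m assms by simp_all
  then have "{x, y} = {x, z}" by simp
  then show "y = z" by (auto simp: doubleton_eq_iff)
qed

lemma has_P_neighbour:
  assumes "x \<in> V2"
  obtains p where "p \<in> P" "{x, p} \<in> E2"
proof (cases "x \<in> P")
  case True
  then show thesis using that matched matched_in_S2 by blast
next
  case False
  then obtain p where "p \<in> P" "{p, x} \<in> E'" using P_neighbour assms by blast
  then show thesis using that subgraph by (auto simp: insert_commute)
qed

lemma LCopy_notin_P: "LCopy v i \<notin> P"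
proof
  assume x: "LCopy v i \<in> P"
  then obtain y where "y \<in> P" "{LCopy v i, y} \<in> E2" using matched matched_in_S2 by blast
  moreover obtain d where "d \<in> D" "{d, LCopy v i} \<in> E'" using D_neighbour x by blast
  then have "d \<in> D" "{LCopy v i, d} \<in> E2" using subgraph by (auto simp: insert_commute)
  ultimately show False using partition(1) leaf_edge_unique by (auto simp: LCopy_adj)
qed

lemma Sub_leaf_in_P:
  assumes "v \<in> L" "e \<in> E" "v \<in> e"
  shows "Sub v e \<in> P"
proof -
  obtain p where "p \<in> P" "{p, LCopy v 1} \<in> E'"
    using P_neighbour LCopy_one_in_S2V[OF assms(1)] LCopy_notin_P by blast
  then have "p \<in> P" "{LCopy v 1, p} \<in> E2" using subgraph by (auto simp: insert_commute)
  then show ?thesis using assms leaf_edge_unique by (auto simp: LCopy_adj)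
qed

lemma other_Sub_or_Orig_in_P:
  assumes "{u, v} \<in> E"
  shows "Sub v {u, v} \<in> P \<or> Orig u \<in> P"
proof -
  have "Sub u {u, v} \<in> V2" using assms by simp
  then obtain p where "p \<in> P" "{Sub u {u, v}, p} \<in> E2" by (rule has_P_neighbour)
  then show ?thesis using edge_distinct[OF assms] LCopy_notin_P by (auto simp: Sub_adj)
qed

lemma Orig_notin_P_if_both_Subs_in_P:
  assumes "{u, v} \<in> E" "Sub u {u, v} \<in> P" "Sub v {u, v} \<in> P"
  shows "Orig u \<notin> P"
proof -
  obtain d where "d \<in> D" "{Sub u {u, v}, d} \<in> E2"
    using D_neighbour[OF assms(2)] subgraph by (auto simp: insert_commute)
  then show ?thesis using assms partition edge_distinct[OF assms(1)] by (auto simp: Sub_adj)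
qed

lemma copy_edge_in_subgraph:
  assumes "v \<in> L" "e \<in> E" "v \<in> e" "1 \<le> i" "i \<le> \<alpha> v"
  shows "{Sub v e, LCopy v i} \<in> E'"
proof -
  have "LCopy v i \<in> V2" using assms by simp
  then obtain p where p: "p \<in> P" "{p, LCopy v i} \<in> E'" using P_neighbour LCopy_notin_P by blast
  then have "{LCopy v i, p} \<in> E2" using subgraph by (auto simp: insert_commute)
  then obtain e' where "p = Sub v e'" "e' \<in> E" "v \<in> e'" by (auto simp: LCopy_adj)
  then have "p = Sub v e" using leaf_edge_unique assms by blast
  then show ?thesis using p(2) by (simp add: insert_commute)
qed

lemma subgraph_eq_if_no_Orig_in_P:
  assumes no_Orig: "\<And>u. Orig u \<notin> P"
  shows "E' = E2"
proof -
  have Sub_in_P: "Sub u {u, v} \<in> P" if "{u, v} \<in> E" for u v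
    using other_Sub_or_Orig_in_P[of v u] that no_Orig by (simp add: insert_commute)
  have "g \<in> E'" if "g \<in> E2" for g
    using that
  proof (cases rule: S2E_cases)
    case (middle u v)
    obtain y where y: "y \<in> P" "{Sub u {u, v}, y} \<in> M" using matched Sub_in_P middle(1) by blast
    from matched_in_S2[OF y(2)] edge_distinct[OF middle(1)] have "y = Sub v {u, v}"
      by (rule Sub_adjE) (use y(1) no_Orig LCopy_notin_P in auto)
    then show ?thesis using y(2) middle(2) matching(1) by blast
  next
    case (orig u e)
    obtain v where v: "e = {u, v}" "u \<noteq> v" using orig(2,3) by (rule edge_other_end)
    obtain d where d: "d \<in> D" "{d, Sub u e} \<in> E'" using D_neighbour Sub_in_P orig(2) v by blast
    then have "{Sub u {u, v}, d} \<in> E2" using subgraph v by (auto simp: insert_commute)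
    then show ?thesis using v(2)
    proof (rule Sub_adjE)
      assume "d = Sub v {u, v}"
      then show ?thesis using Sub_in_P[of v u] orig(2) v d(1) partition(1) by (auto simp: insert_commute)
    next
      assume "d = Orig u"
      then show ?thesis using d(2) orig(4) by (simp add: insert_commute)
    qed (use orig(1) in simp)
  qed (simp add: copy_edge_in_subgraph)
  then show ?thesis using subgraph by blast
qed

lemma Sub_notin_P_if_Orig_matched_elsewhere:
  assumes matched_g: "{Orig u, Sub u g} \<in> M" and z: "{u, z} \<in> E" "{u, z} \<noteq> g"
  shows "Sub u {u, z} \<notin> P"
proof
  assume uz: "Sub u {u, z} \<in> P"
  then obtain y where y: "{Sub u {u, z}, y} \<in> M" "y \<in> P" using matched by blast
  have "y \<noteq> Orig u"
  proof
    assume "y = Orig u"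
    then have "Sub u {u, z} = Sub u g"
      using matched_unique y(1) matched_g by (metis insert_commute)
    then show False using z(2) by simp
  qed
  from matched_in_S2[OF y(1)] edge_distinct[OF z(1)] have "y = Sub z {u, z}"
    by (rule Sub_adjE) (use \<open>y \<noteq> Orig u\<close> y(2) LCopy_notin_P in auto)
  then show False using Orig_notin_P_if_both_Subs_in_P[OF z(1) uz] y(2) matched_g matching(2) by blast
qed

lemma Orig_in_P_spreads:
  assumes u: "Orig u \<in> P"
  obtains w where "{u, w} \<in> E" "w \<in> V - L" "\<And>z. {u, z} \<in> E \<Longrightarrow> z \<noteq> w \<Longrightarrow> Orig z \<in> P"
proof -
  obtain y where "{Orig u, y} \<in> M" "y \<in> P" using matched u by blast
  moreover from this(1) have "{Orig u, y} \<in> E2" by (rule matched_in_S2)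
  then obtain g where g: "y = Sub u g" "g \<in> E" "u \<in> g" by (auto simp: Orig_adj)
  ultimately have matched_g: "{Orig u, Sub u g} \<in> M" and "Sub u g \<in> P" by simp_all
  obtain w where w: "g = {u, w}" "u \<noteq> w" using g(2,3) by (rule edge_other_end)
  have "w \<notin> L"
    using Sub_leaf_in_P[of w g] Orig_notin_P_if_both_Subs_in_P[of u w] g w u \<open>Sub u g \<in> P\<close> by auto
  moreover have "w \<in> V" using g w edge_subset by blast
  moreover have "Orig z \<in> P" if z: "{u, z} \<in> E" "z \<noteq> w" for z
  proof -
    have "{u, z} \<noteq> g" using w z(2) by (auto simp: doubleton_eq_iff)
    then have "Sub u {u, z} \<notin> P" using Sub_notin_P_if_Orig_matched_elsewhere matched_g z(1) by blast
    then show ?thesis using other_Sub_or_Orig_in_P[of z u] z(1) by (simp add: insert_commute)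
  qed
  ultimately show thesis using that g w by blast
qed

end

context positive_two_subdivision
begin

lemma dpdp_S2: "dpdp V2 E2"
proof -
  have "pendant_attached V E {} f" for f :: "'a \<Rightarrow> 'a"
    unfolding pendant_attached_def by simp
  then show ?thesis using dpdp_without_inner_edges by (fastforce simp: inner_edges_def)
qed

lemma corona_subtree_imp_not_minimal:
  assumes "corona_subtree V E Q EQ f"
  shows "\<not> minimal_dpdp V2 E2"
proof -
  obtain a b where ab: "{a, b} \<in> E" "a \<in> Q" "b \<in> Q" using assms by (rule corona_subtree_inner_edge)
  then have "{Sub a {a, b}, Sub b {a, b}} \<in> E2 \<inter> inner_edges Q"
    using middle_edge unfolding inner_edges_def by blast
  then have "E2 - inner_edges Q \<subset> E2" by blast
  moreover have "dpdp V2 (E2 - inner_edges Q)"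
    using corona_subtree_pendant_attached[OF assms] by (rule dpdp_without_inner_edges)
  ultimately show ?thesis unfolding minimal_dpdp_def by blast
qed

lemma not_minimal_imp_corona_subtree:
  assumes "\<not> minimal_dpdp V2 E2"
  obtains Q EQ f where "corona_subtree V E Q EQ f"
proof -
  obtain E' where E': "E' \<subset> E2" "dpdp V2 E'" using assms dpdp_S2 unfolding minimal_dpdp_def by blast
  then obtain D P where DP: "D \<inter> P = {}" "D \<union> P = V2" "dominating V2 E' D"
    "dominating V2 E' P" "induced_perfect_matching E' P"
    unfolding dpdp_def paired_dominating_def by blast
  from DP(5) obtain M where "M \<subseteq> E'" "\<forall>m\<in>M. m \<subseteq> P" "\<forall>x\<in>P. \<exists>!m. m \<in> M \<and> x \<in> m"
    unfolding induced_perfect_matching_def by (elim exE conjE)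
  with DP E'(1) interpret spanning_dpdp V E \<alpha> E' D P M by unfold_locales auto
  define R where "R = {u. Orig u \<in> P}"
  have "\<forall>u\<in>R. \<exists>w. {u, w} \<in> E \<and> w \<in> V - L \<and> (\<forall>z. {u, z} \<in> E \<longrightarrow> z \<noteq> w \<longrightarrow> z \<in> R)"
    unfolding R_def by (metis Orig_in_P_spreads mem_Collect_eq)
  then obtain f where f: "\<And>u. u \<in> R \<Longrightarrow>
      {u, f u} \<in> E \<and> f u \<in> V - L \<and> (\<forall>z. {u, z} \<in> E \<longrightarrow> z \<noteq> f u \<longrightarrow> z \<in> R)"
    by metis
  have "R \<subseteq> V - L" using partition unfolding R_def by auto
  moreover have "R \<noteq> {}" using subgraph_eq_if_no_Orig_in_P E'(1) unfolding R_def by blast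
  ultimately have "\<exists>Q EQ. corona_subtree V E Q EQ f"
    using f by (intro exists_corona_subtree) (auto simp: inward_edge_def)
  then show thesis using that by blast
qed

end

theorem corollary7p4:
  fixes V :: "'a set" and E :: "'a set set" and \<alpha> :: "'a \<Rightarrow> nat"
  assumes "is_tree V E" and "card V \<ge> 2"
    and "\<forall>v \<in> leaves V E. \<alpha> v \<ge> 1"
  shows "dpdp_tree (S2V V E \<alpha>) (S2E V E \<alpha>) \<and>
    (\<not> minimal_dpdp_tree (S2V V E \<alpha>) (S2E V E \<alpha>) \<longleftrightarrow>
      (\<exists>VQ EQ. is_tree VQ EQ \<and> VQ \<subseteq> V - (leaves V E \<union> supports V E) \<and> EQ \<subseteq> E \<and>
         (\<exists>f. inj_on f VQ \<and> (\<forall>x \<in> VQ. f x \<in> V - leaves V E \<and> f x \<notin> VQ \<and> {x, f x} \<in> E)) \<and>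
         (\<forall>x \<in> VQ. degree E x = degree EQ x + 1)))"
proof -
  interpret positive_two_subdivision V E \<alpha> using assms by unfold_locales
  have "\<not> minimal_dpdp_tree V2 E2 \<longleftrightarrow> (\<exists>Q EQ f. corona_subtree V E Q EQ f)"
    unfolding minimal_dpdp_tree_def using tree_S2 corona_subtree_imp_not_minimal
      not_minimal_imp_corona_subtree by blast
  then show ?thesis
    unfolding dpdp_tree_def corona_subtree_def using tree_S2 dpdp_S2 by blast
qed

end
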